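(* Let $d\ge 2$ and let $\mathcal P$ and $\mathcal H$ be as defined in the context. Then $\operatorname{I}(\mathcal P,\mathcal H)\ \ge\ \left(1-\frac{2}{e^2}\right)2^{2d-2}$; in particular $\operatorname{I}(\mathcal P,\mathcal H)\ge\Omega(2^{2d})$.
   Context: Let $d\ge 2$. Define the point set $\mathcal P=\{(x_1,\dots,x_d): x_1,\dots,x_{d-1}\in\{-1,1\},\ x_d\in\mathbb Z,\ |x_d|\le 2\sqrt{d-1}\}$ and the hyperplane set $\mathcal H=\{\{x\in\mathbb R^d:\sum_{i=1}^d a_ix_i=0\}: a_1,\dots,a_{d-1}\in\{0,1\},\ a_d=-1\}$ (so $|\mathcal H|=2^{d-1}$). $\operatorname{I}(\mathcal P,\mathcal H)$ is the number of pairs $(p,h)\in\mathcal P\times\mathcal H$ with $p\in h$. *)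

theory Defs
  imports Complex_Main
begin

text \<open>Points of R^d are represented as real lists of length d; coordinate x_i of the
paper is the list entry at index i-1 (0-based).\<close>

definition pointset :: "nat \<Rightarrow> real list set" where
  "pointset d = {x. length x = d \<and> (\<forall>i < d - 1. x ! i \<in> {-1, 1})
      \<and> x ! (d - 1) \<in> \<int> \<and> \<bar>x ! (d - 1)\<bar> \<le> 2 * sqrt (real (d - 1))}"

definition hyperplane :: "nat \<Rightarrow> real list \<Rightarrow> real list set" where
  "hyperplane d a = {x. length x = d \<and> (\<Sum>i<d. a ! i * x ! i) = 0}"

definition hyperplaneset :: "nat \<Rightarrow> real list set set" where
  "hyperplaneset d = {hyperplane d a | a. length a = d \<and> (\<forall>i < d - 1. a ! i \<in> {0, 1})
      \<and> a ! (d - 1) = -1}"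

definition incidences :: "'a set \<Rightarrow> 'a set set \<Rightarrow> nat" where
  "incidences P H = card {(p, h). p \<in> P \<and> h \<in> H \<and> p \<in> h}"

end

theory Submission imports Defs begin

text \<open>Encode a pair of a point (x, s) \<in> {-1,1}^n \<times> \<int> and a hyperplane with coefficients
  a \<in> {0,1}^n as the list of pairs (x_i, a_i); it is an incidence exactly when
  s = \<Sum> a_i x_i. Over the 4^n choices of (x, a) this sum has mean 0 and second moment
  n 4^n / 2, so by Chebyshev at most 1/8 of the choices violate |s| \<le> 2 \<surd>n. Hence at least
  7/8 \<cdot> 4^(d-1) incidences occur, and 7/8 \<ge> 1 - 2/e^2 since e^2 \<le> 16.\<close>

definition choices :: "(real \<times> real) set" where
  "choices = {(-1, 0), (1, 0), (-1, 1), (1, 1)}"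

definition choice_lists :: "nat \<Rightarrow> (real \<times> real) list set" where
  "choice_lists n = {ps. set ps \<subseteq> choices \<and> length ps = n}"

definition weighted_sum :: "(real \<times> real) list \<Rightarrow> real" where
  "weighted_sum ps = sum_list (map (\<lambda>(x, a). a * x) ps)"

lemma finite_choices: "finite choices"
  by (simp add: choices_def)

lemma finite_choice_lists: "finite (choice_lists n)"
  unfolding choice_lists_def using finite_choices by (rule finite_lists_length_eq)

lemma card_choice_lists: "card (choice_lists n) = 4 ^ n"
proof -
  have "card choices = 4"
    by (simp add: choices_def)
  then show ?thesis
    unfolding choice_lists_def by (simp add: card_lists_length_eq [OF finite_choices])
qed

lemma sum_lists_length_Suc:
  "(\<Sum>xs | set xs \<subseteq> A \<and> length xs = Suc n. f xs)
     = (\<Sum>a\<in>A. \<Sum>xs | set xs \<subseteq> A \<and> length xs = n. f (a # xs))"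
proof -
  let ?L = "{xs. set xs \<subseteq> A \<and> length xs = n}"
  have lists_Suc: "{xs. set xs \<subseteq> A \<and> length xs = Suc n} = (\<lambda>(a, xs). a # xs) ` (A \<times> ?L)"
    by (auto simp: length_Suc_conv image_iff)
  have "inj_on (\<lambda>(a, xs). a # xs) (A \<times> ?L)"
    by (auto simp: inj_on_def)
  then have "(\<Sum>xs | set xs \<subseteq> A \<and> length xs = Suc n. f xs) = (\<Sum>(a, xs)\<in>A \<times> ?L. f (a # xs))"
    unfolding lists_Suc by (subst sum.reindex) (simp_all add: case_prod_beta)
  then show ?thesis
    by (simp add: sum.cartesian_product)
qed

lemma sum_choice_lists_Suc:
  "(\<Sum>ps\<in>choice_lists (Suc n). f ps) = (\<Sum>c\<in>choices. \<Sum>ps\<in>choice_lists n. f (c # ps))"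
  unfolding choice_lists_def by (rule sum_lists_length_Suc)

lemma sum_choices:
  "(\<Sum>c\<in>choices. g c) = g (-1, 0) + g (1, 0) + g (-1, 1) + g (1, 1)"
  by (simp add: choices_def add.assoc)

lemma weighted_sum_Nil [simp]: "weighted_sum [] = 0"
  by (simp add: weighted_sum_def)

lemma weighted_sum_Cons: "weighted_sum (c # ps) = snd c * fst c + weighted_sum ps"
  by (simp add: weighted_sum_def case_prod_beta)

lemma weighted_sum_eq_sum_nth:
  "weighted_sum ps = (\<Sum>i<length ps. map snd ps ! i * map fst ps ! i)"
  unfolding weighted_sum_def sum_list_sum_nth by (simp add: atLeast0LessThan case_prod_beta)

lemma weighted_sum_in_Ints: "set ps \<subseteq> choices \<Longrightarrow> weighted_sum ps \<in> \<int>"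
  by (induction ps) (auto simp: choices_def weighted_sum_Cons)

lemma sum_weighted_sum: "(\<Sum>ps\<in>choice_lists n. weighted_sum ps) = 0"
proof (induction n)
  case 0
  then show ?case by (simp add: choice_lists_def)
next
  case (Suc n)
  then show ?case
    unfolding sum_choice_lists_Suc weighted_sum_Cons sum.distrib sum_choices by simp
qed

lemma sum_weighted_sum_squared:
  "(\<Sum>ps\<in>choice_lists n. (weighted_sum ps)\<^sup>2) = real n * 4 ^ n / 2"
proof (induction n)
  case 0
  then show ?case by (simp add: choice_lists_def)
next
  case (Suc n)
  have shift: "(\<Sum>ps\<in>choice_lists n. (t + weighted_sum ps)\<^sup>2)
      = t\<^sup>2 * 4 ^ n + 2 * t * (\<Sum>ps\<in>choice_lists n. weighted_sum ps)
        + (\<Sum>ps\<in>choice_lists n. (weighted_sum ps)\<^sup>2)" for t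
    by (simp add: power2_sum sum.distrib sum_distrib_left card_choice_lists)
  show ?case
    unfolding sum_choice_lists_Suc weighted_sum_Cons shift sum_choices sum_weighted_sum Suc
    by (simp add: field_simps)
qed

lemma card_large_weighted_sum:
  assumes "n > 0"
  shows "real (card {ps \<in> choice_lists n. 2 * sqrt (real n) < \<bar>weighted_sum ps\<bar>}) \<le> 4 ^ n / 8"
    (is "real (card ?B) \<le> _")
proof -
  have "real (card ?B) * (4 * real n) = (\<Sum>ps\<in>?B. (2 * sqrt (real n))\<^sup>2)"
    by (simp add: power_mult_distrib)
  also have "\<dots> \<le> (\<Sum>ps\<in>?B. (weighted_sum ps)\<^sup>2)"
  proof (rule sum_mono)
    fix ps assume "ps \<in> ?B"
    then have "\<bar>2 * sqrt (real n)\<bar> \<le> \<bar>weighted_sum ps\<bar>"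
      by simp
    then show "(2 * sqrt (real n))\<^sup>2 \<le> (weighted_sum ps)\<^sup>2"
      by (simp only: abs_le_square_iff)
  qed
  also have "\<dots> \<le> (\<Sum>ps\<in>choice_lists n. (weighted_sum ps)\<^sup>2)"
    by (intro sum_mono2 finite_choice_lists) auto
  also have "\<dots> = real n * 4 ^ n / 2"
    by (rule sum_weighted_sum_squared)
  finally show ?thesis
    using assms by (simp add: field_simps)
qed

lemma card_small_weighted_sum:
  assumes "n > 0"
  shows "7 / 8 * 4 ^ n \<le> real (card {ps \<in> choice_lists n. \<bar>weighted_sum ps\<bar> \<le> 2 * sqrt (real n)})"
proof -
  let ?G = "{ps \<in> choice_lists n. \<bar>weighted_sum ps\<bar> \<le> 2 * sqrt (real n)}"
  let ?B = "{ps \<in> choice_lists n. 2 * sqrt (real n) < \<bar>weighted_sum ps\<bar>}"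
  have "card ?G + card ?B = card (?G \<union> ?B)"
    by (rule card_Un_disjoint [symmetric]) (auto intro: rev_finite_subset [OF finite_choice_lists])
  also have "?G \<union> ?B = choice_lists n"
    by auto
  finally have "real (card ?G) + real (card ?B) = 4 ^ n"
    by (simp add: card_choice_lists flip: of_nat_add)
  then show ?thesis
    using card_large_weighted_sum [OF assms] by linarith
qed

lemma hyperplane_snoc_minus_one_inject:
  assumes "length a = n" "length b = n"
    and "hyperplane (Suc n) (a @ [-1]) = hyperplane (Suc n) (b @ [-1])"
  shows "a = b"
proof (rule nth_equalityI)
  show "length a = length b"
    using assms by simp
  fix i assume "i < length a"
  define e where "e = (replicate n (0::real))[i := 1]"
  \<comment> \<open>The point (e_i, a_i) lies on the first hyperplane, and on the second only if b_i = a_i.\<close>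
  have e_dot: "(\<Sum>j<n. c ! j * e ! j) = c ! i" for c :: "real list"
    using \<open>i < length a\<close> assms(1)
    by (simp add: e_def nth_list_update if_distrib [of "(*) _"] cong: if_cong)
  have dot: "(\<Sum>j<Suc n. (c @ [-1]) ! j * (e @ [t]) ! j) = c ! i - t"
    if "length c = n" for c t
    using that e_dot by (simp add: e_def nth_append)
  have "e @ [a ! i] \<in> hyperplane (Suc n) (a @ [-1])"
    using dot [OF assms(1)] by (simp add: hyperplane_def e_def)
  then have "e @ [a ! i] \<in> hyperplane (Suc n) (b @ [-1])"
    using assms(3) by simp
  then show "a ! i = b ! i"
    using dot [OF assms(2)] by (simp add: hyperplane_def)
qed

lemma finite_pointset: "finite (pointset d)"
proof (rule finite_subset)
  let ?Z = "{k \<in> \<int>. \<bar>k\<bar> \<le> 1 + 2 * sqrt (real (d - 1))}"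
  show "pointset d \<subseteq> {x. set x \<subseteq> ?Z \<and> length x = d}"
  proof clarify
    fix x assume x: "x \<in> pointset d"
    show "set x \<subseteq> ?Z \<and> length x = d"
    proof (intro conjI subsetI)
      fix y assume "y \<in> set x"
      then obtain i where "i < d" "y = x ! i"
        using x by (auto simp: in_set_conv_nth pointset_def)
      moreover have "i < d - 1 \<or> i = d - 1"
        using \<open>i < d\<close> by linarith
      ultimately show "y \<in> ?Z"
        using x by (auto simp: pointset_def)
    qed (use x in \<open>simp add: pointset_def\<close>)
  qed
  show "finite {x. set x \<subseteq> ?Z \<and> length x = d}"
    by (intro finite_lists_length_eq finite_abs_int_segment)
qed

lemma finite_hyperplaneset: "finite (hyperplaneset d)"
proof (rule finite_subset)
  show "hyperplaneset d \<subseteq> hyperplane d ` {a. set a \<subseteq> {0, 1, -1} \<and> length a = d}"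
  proof clarify
    fix h assume "h \<in> hyperplaneset d"
    then obtain a where a: "length a = d" "\<forall>i < d - 1. a ! i \<in> {0, 1}" "a ! (d - 1) = -1"
      and "h = hyperplane d a"
      by (auto simp: hyperplaneset_def)
    moreover have "set a \<subseteq> {0, 1, -1}"
    proof
      fix y assume "y \<in> set a"
      then obtain i where "i < d" "y = a ! i"
        using a by (auto simp: in_set_conv_nth)
      moreover have "i < d - 1 \<or> i = d - 1"
        using \<open>i < d\<close> by linarith
      ultimately show "y \<in> {0, 1, -1}"
        using a by auto
    qed
    ultimately show "h \<in> hyperplane d ` {a. set a \<subseteq> {0, 1, -1} \<and> length a = d}"
      by auto
  qed
  show "finite (hyperplane d ` {a. set a \<subseteq> {0, 1, -1 :: real} \<and> length a = d})"
    by (intro finite_imageI finite_lists_length_eq) simp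
qed

lemma incidence_of_choice_list:
  assumes "ps \<in> choice_lists n" and "\<bar>weighted_sum ps\<bar> \<le> 2 * sqrt (real n)"
  shows "map fst ps @ [weighted_sum ps] \<in> pointset (Suc n)"
    and "hyperplane (Suc n) (map snd ps @ [-1]) \<in> hyperplaneset (Suc n)"
    and "map fst ps @ [weighted_sum ps] \<in> hyperplane (Suc n) (map snd ps @ [-1])"
proof -
  have len: "length ps = n" and "set ps \<subseteq> choices"
    using assms(1) by (auto simp: choice_lists_def)
  have entries: "fst (ps ! i) \<in> {-1, 1}" "snd (ps ! i) \<in> {0, 1}" if "i < n" for i
  proof -
    have "ps ! i \<in> choices"
      using that len \<open>set ps \<subseteq> choices\<close> by (metis nth_mem subsetD)
    then show "fst (ps ! i) \<in> {-1, 1}" "snd (ps ! i) \<in> {0, 1}"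
      by (auto simp: choices_def)
  qed
  show "map fst ps @ [weighted_sum ps] \<in> pointset (Suc n)"
    using len entries(1) assms(2) weighted_sum_in_Ints [OF \<open>set ps \<subseteq> choices\<close>]
    by (simp add: pointset_def nth_append)
  show "hyperplane (Suc n) (map snd ps @ [-1]) \<in> hyperplaneset (Suc n)"
    using len entries(2) unfolding hyperplaneset_def
    by (intro CollectI exI [of _ "map snd ps @ [-1]"]) (simp add: nth_append)
  show "map fst ps @ [weighted_sum ps] \<in> hyperplane (Suc n) (map snd ps @ [-1])"
    using len by (simp add: hyperplane_def nth_append weighted_sum_eq_sum_nth)
qed

lemma card_small_weighted_sum_le_incidences:
  "card {ps \<in> choice_lists n. \<bar>weighted_sum ps\<bar> \<le> 2 * sqrt (real n)}
     \<le> incidences (pointset (Suc n)) (hyperplaneset (Suc n))"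
proof -
  let ?G = "{ps \<in> choice_lists n. \<bar>weighted_sum ps\<bar> \<le> 2 * sqrt (real n)}"
  let ?F = "\<lambda>ps. (map fst ps @ [weighted_sum ps], hyperplane (Suc n) (map snd ps @ [-1]))"
  have "inj_on ?F ?G"
  proof
    fix p q assume "p \<in> ?G" "q \<in> ?G" and eq: "?F p = ?F q"
    then have "map snd p = map snd q"
      by (intro hyperplane_snoc_minus_one_inject [of _ n]) (auto simp: choice_lists_def)
    moreover have "map fst p = map fst q"
      using eq by simp
    ultimately show "p = q"
      by (metis zip_map_fst_snd)
  qed
  moreover have "?F ` ?G \<subseteq> {(p, h). p \<in> pointset (Suc n) \<and> h \<in> hyperplaneset (Suc n) \<and> p \<in> h}"
    using incidence_of_choice_list by blast
  moreover have "finite {(p, h). p \<in> pointset (Suc n) \<and> h \<in> hyperplaneset (Suc n) \<and> p \<in> h}"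
    by (rule finite_subset [OF _ finite_cartesian_product [OF finite_pointset finite_hyperplaneset]])
      auto
  ultimately show ?thesis
    unfolding incidences_def by (rule card_inj_on_le)
qed

lemma exp_two_le_16: "exp (2::real) \<le> 16"
proof -
  have "exp (2::real) = exp 1 * exp 1"
    by (simp flip: exp_add)
  also have "\<dots> \<le> 3 * 3"
    using exp_le by (intro mult_mono) auto
  finally show ?thesis by simp
qed

theorem proposition4p4:
  fixes d :: nat
  assumes "d \<ge> 2"
  shows "real (incidences (pointset d) (hyperplaneset d)) \<ge> (1 - 2 / exp 2) * 2 ^ (2 * d - 2)"
proof -
  define n where "n = d - 1"
  have d: "d = Suc n" and "n > 0"
    using assms by (auto simp: n_def)
  have "1 - 2 / exp 2 \<le> (7 / 8 :: real)"
    using divide_left_mono [OF exp_two_le_16, of 2] by simp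
  then have "(1 - 2 / exp 2) * 2 ^ (2 * d - 2) \<le> 7 / 8 * (4::real) ^ n"
    by (simp add: d power_mult)
  also have "\<dots> \<le> real (card {ps \<in> choice_lists n. \<bar>weighted_sum ps\<bar> \<le> 2 * sqrt (real n)})"
    using card_small_weighted_sum [OF \<open>n > 0\<close>] .
  also have "\<dots> \<le> real (incidences (pointset d) (hyperplaneset d))"
    using card_small_weighted_sum_le_incidences [of n] by (simp add: d)
  finally show ?thesis .
qed

end
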